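(* Let $S=(\mathcal{E},\Sigma,X,\mathcal{O})$ be an entity, $e\in\mathcal{E}$ and $p\in\Sigma$. Then $\mathcal{Y}_{orth}\subseteq\mathcal{Y}_{eig}$, $\mathcal{F}_{orth}(e)\subseteq\mathcal{F}_{eig}(e)$ and $\mathcal{G}_{orth}(p)\subseteq\mathcal{G}_{eig}(p)$.
   Context: An entity $S=(\mathcal{E},\Sigma,X,\mathcal{O})$ consists of sets $\mathcal{E},\Sigma$ and for each $e\in\mathcal{E},p\in\Sigma$ a nonempty set $O(e,p)$, with $X=\bigcup O(e,p)$; $O(e)=\bigcup_pO(e,p)$, $O(p)=\bigcup_eO(e,p)$. Eigen systems: $eig:\mathcal{P}(X)\to\mathcal{P}(\mathcal{E}\times\Sigma)$, $(e,p)\in eig(A)\iff O(e,p)\subseteq A$, $\mathcal{Y}_{eig}=\{eig(A):A\subseteq X\}$; $eig_e:\mathcal{P}(O(e))\to\mathcal{P}(\Sigma)$, $q\in eig_e(A)\iff O(e,q)\subseteq A$, $\mathcal{F}_{eig}(e)=\{eig_e(A):A\subseteq O(e)\}$; $eig_p:\mathcal{P}(O(p))\to\mathcal{P}(\mathcal{E})$, $f\in eig_p(A)\iff O(f,p)\subseteq A$, $\mathcal{G}_{eig}(p)=\{eig_p(A):A\subseteq O(p)\}$. Orthogonalities: $(e,p)\perp(f,q)$ iff $O(e,p)\cap O(f,q)=\emptyset$ on $\mathcal{E}\times\Sigma$; $q\perp_e r$ iff $O(e,q)\cap O(e,r)=\emptyset$ on $\Sigma$; $f\perp_p g$ iff $O(f,p)\cap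 O(g,p)=\emptyset$ on $\mathcal{E}$. For an orthogonality relation $\perp$ on a set $Z$ and $K\subseteq Z$, $K^\perp=\{a\in Z: a\perp b\text{ for all }b\in K\}$; a set $K$ is ortho closed iff $K=(K^\perp)^\perp$. $\mathcal{Y}_{orth}$, $\mathcal{F}_{orth}(e)$, $\mathcal{G}_{orth}(p)$ denote the collections of ortho closed subsets of $\mathcal{E}\times\Sigma$, $\Sigma$, $\mathcal{E}$ with respect to $\perp$, $\perp_e$, $\perp_p$ respectively. *)

theory Defs
  imports Main
begin

text \<open>An entity: states E, properties S, outcome sets Ob e p (nonempty for e in E, p in S).\<close>
definition entity :: "'e set \<Rightarrow> 'p set \<Rightarrow> ('e \<Rightarrow> 'p \<Rightarrow> 'x set) \<Rightarrow> bool" where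
  "entity E S Ob \<longleftrightarrow> (\<forall>e\<in>E. \<forall>p\<in>S. Ob e p \<noteq> {})"

definition outcomes :: "'e set \<Rightarrow> 'p set \<Rightarrow> ('e \<Rightarrow> 'p \<Rightarrow> 'x set) \<Rightarrow> 'x set" where
  "outcomes E S Ob = (\<Union>e\<in>E. \<Union>p\<in>S. Ob e p)"

definition outcomes_e :: "'p set \<Rightarrow> ('e \<Rightarrow> 'p \<Rightarrow> 'x set) \<Rightarrow> 'e \<Rightarrow> 'x set" where
  "outcomes_e S Ob e = (\<Union>p\<in>S. Ob e p)"

definition outcomes_p :: "'e set \<Rightarrow> ('e \<Rightarrow> 'p \<Rightarrow> 'x set) \<Rightarrow> 'p \<Rightarrow> 'x set" where
  "outcomes_p E Ob p = (\<Union>e\<in>E. Ob e p)"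

definition eig :: "'e set \<Rightarrow> 'p set \<Rightarrow> ('e \<Rightarrow> 'p \<Rightarrow> 'x set) \<Rightarrow> 'x set \<Rightarrow> ('e \<times> 'p) set" where
  "eig E S Ob A = {(e, p). e \<in> E \<and> p \<in> S \<and> Ob e p \<subseteq> A}"

definition Y_eig :: "'e set \<Rightarrow> 'p set \<Rightarrow> ('e \<Rightarrow> 'p \<Rightarrow> 'x set) \<Rightarrow> ('e \<times> 'p) set set" where
  "Y_eig E S Ob = {eig E S Ob A | A. A \<subseteq> outcomes E S Ob}"

definition eig_e :: "'p set \<Rightarrow> ('e \<Rightarrow> 'p \<Rightarrow> 'x set) \<Rightarrow> 'e \<Rightarrow> 'x set \<Rightarrow> 'p set" where
  "eig_e S Ob e A = {q \<in> S. Ob e q \<subseteq> A}"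

definition F_eig :: "'p set \<Rightarrow> ('e \<Rightarrow> 'p \<Rightarrow> 'x set) \<Rightarrow> 'e \<Rightarrow> 'p set set" where
  "F_eig S Ob e = {eig_e S Ob e A | A. A \<subseteq> outcomes_e S Ob e}"

definition eig_p :: "'e set \<Rightarrow> ('e \<Rightarrow> 'p \<Rightarrow> 'x set) \<Rightarrow> 'p \<Rightarrow> 'x set \<Rightarrow> 'e set" where
  "eig_p E Ob p A = {f \<in> E. Ob f p \<subseteq> A}"

definition G_eig :: "'e set \<Rightarrow> ('e \<Rightarrow> 'p \<Rightarrow> 'x set) \<Rightarrow> 'p \<Rightarrow> 'e set set" where
  "G_eig E Ob p = {eig_p E Ob p A | A. A \<subseteq> outcomes_p E Ob p}"

definition orth_compl :: "'a set \<Rightarrow> ('a \<Rightarrow> 'a \<Rightarrow> bool) \<Rightarrow> 'a set \<Rightarrow> 'a set" where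
  "orth_compl Z R K = {a \<in> Z. \<forall>b\<in>K. R a b}"

definition ortho_closed_sets :: "'a set \<Rightarrow> ('a \<Rightarrow> 'a \<Rightarrow> bool) \<Rightarrow> 'a set set" where
  "ortho_closed_sets Z R = {K. K \<subseteq> Z \<and> K = orth_compl Z R (orth_compl Z R K)}"

definition orth :: "('e \<Rightarrow> 'p \<Rightarrow> 'x set) \<Rightarrow> ('e \<times> 'p) \<Rightarrow> ('e \<times> 'p) \<Rightarrow> bool" where
  "orth Ob a b \<longleftrightarrow> Ob (fst a) (snd a) \<inter> Ob (fst b) (snd b) = {}"

definition orth_e :: "('e \<Rightarrow> 'p \<Rightarrow> 'x set) \<Rightarrow> 'e \<Rightarrow> 'p \<Rightarrow> 'p \<Rightarrow> bool" where
  "orth_e Ob e q r \<longleftrightarrow> Ob e q \<inter> Ob e r = {}"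

definition orth_p :: "('e \<Rightarrow> 'p \<Rightarrow> 'x set) \<Rightarrow> 'p \<Rightarrow> 'e \<Rightarrow> 'e \<Rightarrow> bool" where
  "orth_p Ob p f g \<longleftrightarrow> Ob f p \<inter> Ob g p = {}"

definition Y_orth :: "'e set \<Rightarrow> 'p set \<Rightarrow> ('e \<Rightarrow> 'p \<Rightarrow> 'x set) \<Rightarrow> ('e \<times> 'p) set set" where
  "Y_orth E S Ob = ortho_closed_sets (E \<times> S) (orth Ob)"

definition F_orth :: "'p set \<Rightarrow> ('e \<Rightarrow> 'p \<Rightarrow> 'x set) \<Rightarrow> 'e \<Rightarrow> 'p set set" where
  "F_orth S Ob e = ortho_closed_sets S (orth_e Ob e)"

definition G_orth :: "'e set \<Rightarrow> ('e \<Rightarrow> 'p \<Rightarrow> 'x set) \<Rightarrow> 'p \<Rightarrow> 'e set set" where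
  "G_orth E Ob p = ortho_closed_sets E (orth_p Ob p)"

end

theory Submission
  imports Defs
begin

(* All three orthogonalities are disjointness of outcome sets.  For such a relation an ortho
   closed set K equals K\<^sup>\<perp>\<^sup>\<perp>, i.e. it consists of the alternatives whose outcomes avoid every
   outcome of K\<^sup>\<perp>; so K is the eigen set of the outcomes not produced by K\<^sup>\<perp>. *)

lemma ortho_closed_disjointness_imp_eigen:
  assumes "K \<in> ortho_closed_sets Z (\<lambda>a b. g a \<inter> g b = {})"
  shows "\<exists>A \<subseteq> (\<Union>a\<in>Z. g a). K = {a \<in> Z. g a \<subseteq> A}"
proof -
  let ?perp = "orth_compl Z (\<lambda>a b. g a \<inter> g b = {})"
  define A where "A = (\<Union>a\<in>Z. g a) - (\<Union>b\<in>?perp K. g b)"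
  have "K = ?perp (?perp K)"
    using assms unfolding ortho_closed_sets_def by blast
  also have "\<dots> = {a \<in> Z. g a \<subseteq> A}"
    unfolding A_def orth_compl_def by blast
  finally have "K = {a \<in> Z. g a \<subseteq> A}" .
  moreover have "A \<subseteq> (\<Union>a\<in>Z. g a)"
    unfolding A_def by blast
  ultimately show ?thesis
    by blast
qed

lemma Y_orth_subset_Y_eig: "Y_orth E S Ob \<subseteq> Y_eig E S Ob"
proof
  fix K assume "K \<in> Y_orth E S Ob"
  then have "K \<in> ortho_closed_sets (E \<times> S) (\<lambda>a b. case_prod Ob a \<inter> case_prod Ob b = {})"
    unfolding Y_orth_def orth_def by (simp add: case_prod_beta)
  from ortho_closed_disjointness_imp_eigen[OF this] obtain A
    where "A \<subseteq> (\<Union>a\<in>E \<times> S. case_prod Ob a)" and "K = {a \<in> E \<times> S. case_prod Ob a \<subseteq> A}"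
    by blast
  then have "A \<subseteq> outcomes E S Ob" and "K = eig E S Ob A"
    unfolding outcomes_def eig_def by fastforce+
  then show "K \<in> Y_eig E S Ob"
    unfolding Y_eig_def by blast
qed

lemma F_orth_subset_F_eig: "F_orth S Ob e \<subseteq> F_eig S Ob e"
proof
  fix K assume "K \<in> F_orth S Ob e"
  then have "K \<in> ortho_closed_sets S (\<lambda>q r. Ob e q \<inter> Ob e r = {})"
    unfolding F_orth_def orth_e_def by simp
  from ortho_closed_disjointness_imp_eigen[OF this] show "K \<in> F_eig S Ob e"
    unfolding F_eig_def eig_e_def outcomes_e_def by blast
qed

lemma G_orth_subset_G_eig: "G_orth E Ob p \<subseteq> G_eig E Ob p"
proof
  fix K assume "K \<in> G_orth E Ob p"
  then have "K \<in> ortho_closed_sets E (\<lambda>f g. Ob f p \<inter> Ob g p = {})"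
    unfolding G_orth_def orth_p_def by simp
  from ortho_closed_disjointness_imp_eigen[OF this] show "K \<in> G_eig E Ob p"
    unfolding G_eig_def eig_p_def outcomes_p_def by blast
qed

theorem mainTheorem6:
  fixes E :: "'e set" and S :: "'p set" and Ob :: "'e \<Rightarrow> 'p \<Rightarrow> 'x set"
  assumes "entity E S Ob" and "e \<in> E" and "p \<in> S"
  shows "Y_orth E S Ob \<subseteq> Y_eig E S Ob \<and> F_orth S Ob e \<subseteq> F_eig S Ob e
         \<and> G_orth E Ob p \<subseteq> G_eig E Ob p"
  by (intro conjI Y_orth_subset_Y_eig F_orth_subset_F_eig G_orth_subset_G_eig)

end
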